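(* Suppose Assumptions 1 and 3 hold and $\boldsymbol{x}\notin\mathcal{Z}$. Let $\boldsymbol{y}^*=(\boldsymbol{u}^*,\rho^* )$ with $\rho^*>0$ be a solution of $\boldsymbol{F}(\boldsymbol{y})=\boldsymbol{0}$. Then every $J\in\mathcal{J}_{\boldsymbol{F}}(\boldsymbol{y}^* )$ is nonsingular. Furthermore, there exist a neighborhood $N(\boldsymbol{y}^* )$ of $\boldsymbol{y}^*$ and a constant $C>0$ such that for every $\boldsymbol{y}\in N(\boldsymbol{y}^* )$ and every $J\in\mathcal{J}_{\boldsymbol{F}}(\boldsymbol{y})$, $J$ is nonsingular and $\|J^{-1}\|\le C$.
   Context: Assumption 1: $l:\mathbb{R}\to\mathbb{R}$ is nondecreasing and convex, and $\inf_x l(x)<\lambda$. Assumption 3: $l$ is differentiable and nonconstant, and $l'$ is semismooth with respect to its Clarke subdifferential $\partial l'$. $\mathcal{Z}=\{\boldsymbol{z}\in\mathbb{R}^m:\frac1m\sum_i l(z_i)\le\lambda\}$. $L(\boldsymbol{u})=\sum_{i=1}^m l(u_i)$, $\nabla L(\boldsymbol{u})=(l'(u_i))_{i}$, $\partial\nabla L(\boldsymbol{u})=\{\mathrm{diag}(\eta_1,\dots,\eta_m):\eta_i\in\partial l'(u_i)\}$. For $\boldsymbol{y}=(\boldsymbol{u},\rho)$: $\boldsymbol{F}(\boldsymbol{y})=\big(\boldsymbol{u}-\boldsymbol{x}+\frac{\rho}{m}\nabla L(\boldsymbol{u}),\ \frac1mL(\boldsymbol{u})-\lambda\big)$ and $\mathcal{J}_{\boldsymbol{F}}(\boldsymbol{y})=\Big\{\begin{bmatrix}\mathbf{I}+\frac{\rho}{m}\Lambda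 & \frac1m\nabla L(\boldsymbol{u})\\ \frac1m\nabla L(\boldsymbol{u})^\top & 0\end{bmatrix}:\Lambda\in\partial\nabla L(\boldsymbol{u})\Big\}$. $\|\cdot\|$ on matrices is the spectral norm. *)

theory Defs
  imports "HOL-Analysis.Analysis"
begin

definition clarke_subdiff :: "(real \<Rightarrow> real) \<Rightarrow> real \<Rightarrow> real set" where
  "clarke_subdiff g x = convex hull
     {d. \<exists>s::nat \<Rightarrow> real. s \<longlonglongrightarrow> x \<and> (\<forall>k. g differentiable (at (s k)))
                         \<and> (\<lambda>k. deriv g (s k)) \<longlonglongrightarrow> d}"

definition has_dir_deriv :: "(real \<Rightarrow> real) \<Rightarrow> real \<Rightarrow> real \<Rightarrow> real \<Rightarrow> bool" where
  "has_dir_deriv g x h d \<longleftrightarrow> ((\<lambda>t. (g (x + t * h) - g x) / t) \<longlongrightarrow> d) (at_right 0)"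

definition dir_deriv :: "(real \<Rightarrow> real) \<Rightarrow> real \<Rightarrow> real \<Rightarrow> real" where
  "dir_deriv g x h = (THE d. has_dir_deriv g x h d)"

definition semismooth_at :: "(real \<Rightarrow> real) \<Rightarrow> real \<Rightarrow> bool" where
  "semismooth_at g x \<longleftrightarrow>
     (\<exists>\<delta>>0. \<exists>K. K-lipschitz_on (ball x \<delta>) g) \<and>
     (\<forall>h. \<exists>d. has_dir_deriv g x h d) \<and>
     (\<forall>\<epsilon>>0. \<exists>\<delta>>0. \<forall>h V. 0 < \<bar>h\<bar> \<and> \<bar>h\<bar> < \<delta> \<and> V \<in> clarke_subdiff g (x + h) \<longrightarrow>
        \<bar>V * h - dir_deriv g x h\<bar> \<le> \<epsilon> * \<bar>h\<bar>)"

text \<open>Generalized Jacobian of F at y = (u, rho), as (m+1)x(m+1) matrices indexed by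
  'm + unit (Inl i = component i of u, Inr () = the rho component).
  eta i ranges over the Clarke subdifferential of l' at u_i.\<close>
definition JF_set :: "(real \<Rightarrow> real) \<Rightarrow> real^'m::finite \<Rightarrow> real \<Rightarrow> (real^('m + unit)^('m + unit)) set" where
  "JF_set l u \<rho> =
     {J. \<exists>\<eta>::'m \<Rightarrow> real. (\<forall>i. \<eta> i \<in> clarke_subdiff (deriv l) (u $ i)) \<and>
        J = (\<chi> a b. (case a of
               Inl i \<Rightarrow> (case b of
                          Inl j \<Rightarrow> (if i = j then 1 + \<rho> / real CARD('m) * \<eta> i else 0)
                        | Inr _ \<Rightarrow> deriv l (u $ i) / real CARD('m))
             | Inr _ \<Rightarrow> (case b of
                          Inl j \<Rightarrow> deriv l (u $ j) / real CARD('m)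
                        | Inr _ \<Rightarrow> 0)))}"

definition spec_norm :: "real^'n::finite^'k::finite \<Rightarrow> real" where
  "spec_norm A = onorm (\<lambda>v. A *v v)"

end

theory Submission
  imports Defs
begin

text \<open>Every J in the generalized Jacobian is a bordered matrix [[D, b], [b^T, 0]] with
  D = I + (\<rho>/m) diag \<eta> and b = \<nabla>L(u)/m. Convexity makes l' monotone and semismoothness makes it
  locally Lipschitz, so near u* all Clarke subgradients \<eta>_i lie in a fixed interval [0, K] and
  1 \<le> D_ii \<le> 1 + \<rho>K/m. Eliminating p from D p + b q = r, b^T p = t gives
  q (b^T D^-1 b) = b^T D^-1 r - t with b^T D^-1 b \<ge> |b|^2 / max D_ii, so J v = w forces
  |v| \<le> C |w| as long as |b| stays away from 0. This holds near u*, since \<nabla>L(u*) = 0 would give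
  u* = x, contradicting x \<notin> Z.\<close>

lemma bordered_schur_complement:
  fixes d b p r :: "'m::finite \<Rightarrow> real"
  assumes d: "\<And>i. d i \<noteq> 0" and eq: "\<And>i. d i * p i + b i * q = r i"
  shows "q * (\<Sum>i\<in>UNIV. b i ^ 2 / d i) = (\<Sum>i\<in>UNIV. b i * r i / d i) - (\<Sum>i\<in>UNIV. b i * p i)"
proof -
  have "b i * p i = b i * r i / d i - q * (b i ^ 2 / d i)" for i
    using d[of i] eq[of i, symmetric] by (simp add: field_simps power2_eq_square)
  then show ?thesis
    by (simp add: sum_subtractf sum_distrib_left)
qed

lemma sum_square_divide_ge:
  fixes d b :: "'m::finite \<Rightarrow> real"
  assumes "\<And>i. 0 < d i" "\<And>i. d i \<le> D"
  shows "(\<Sum>i\<in>UNIV. b i ^ 2) / D \<le> (\<Sum>i\<in>UNIV. b i ^ 2 / d i)"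
proof -
  have "0 < D"
    using assms(1)[of undefined] assms(2)[of undefined] by linarith
  then show ?thesis
    unfolding sum_divide_distrib using assms by (intro sum_mono divide_left_mono) auto
qed

lemma bordered_system_bound:
  fixes d b p r :: "'m::finite \<Rightarrow> real" and q D B \<beta> W :: real
  assumes d: "\<And>i. 1 \<le> d i" "\<And>i. d i \<le> D" and b: "\<And>i. \<bar>b i\<bar> \<le> B"
    and \<beta>: "0 < \<beta>" "\<beta> \<le> (\<Sum>i\<in>UNIV. b i ^ 2)"
    and eq: "\<And>i. d i * p i + b i * q = r i"
    and W: "\<And>i. \<bar>r i\<bar> \<le> W" "\<bar>\<Sum>i\<in>UNIV. b i * p i\<bar> \<le> W"
  shows "\<bar>q\<bar> \<le> (CARD('m) * B + 1) * D / \<beta> * W" and "\<bar>p i\<bar> \<le> W + B * \<bar>q\<bar>"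
proof -
  define S where "S = (\<Sum>i\<in>UNIV. b i ^ 2 / d i)"
  have d_pos: "0 < d i" for i
    using d(1)[of i] by simp
  have D1: "1 \<le> D"
    using d order_trans by blast
  have B0: "0 \<le> B" and W0: "0 \<le> W"
    using b W(2) abs_ge_zero order_trans by blast+
  have "\<beta> / D \<le> (\<Sum>i\<in>UNIV. b i ^ 2) / D"
    using \<beta> D1 by (simp add: divide_right_mono)
  also have "\<dots> \<le> S"
    unfolding S_def using d_pos d(2) by (rule sum_square_divide_ge)
  finally have S: "\<beta> / D \<le> S" .
  have S_pos: "0 < S"
    using S \<beta> D1 by (smt (verit) divide_pos_pos)
  have term_bound: "\<bar>b i * r i / d i\<bar> \<le> B * W" for i
  proof -
    have "\<bar>b i * r i / d i\<bar> \<le> \<bar>b i * r i\<bar>"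
      using d(1)[of i] d_pos[of i] by (simp add: abs_divide divide_le_eq mult_le_cancel_left1)
    also have "\<dots> \<le> B * W"
      using b W(1) by (simp add: abs_mult mult_mono')
    finally show ?thesis .
  qed
  have "\<bar>\<Sum>i\<in>UNIV. b i * r i / d i\<bar> \<le> (\<Sum>i\<in>UNIV. \<bar>b i * r i / d i\<bar>)"
    by (rule sum_abs)
  also have "\<dots> \<le> (\<Sum>i\<in>(UNIV::'m set). B * W)"
    using term_bound by (intro sum_mono)
  finally have sum_bound: "\<bar>\<Sum>i\<in>UNIV. b i * r i / d i\<bar> \<le> CARD('m) * (B * W)"
    by simp
  have "q * S = (\<Sum>i\<in>UNIV. b i * r i / d i) - (\<Sum>i\<in>UNIV. b i * p i)"
    unfolding S_def by (rule bordered_schur_complement[OF _ eq]) (metis d_pos less_irrefl)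
  then have "\<bar>q\<bar> * S = \<bar>(\<Sum>i\<in>UNIV. b i * r i / d i) - (\<Sum>i\<in>UNIV. b i * p i)\<bar>"
    using S_pos by (metis abs_mult abs_of_pos)
  also have "\<dots> \<le> CARD('m) * (B * W) + W"
    using sum_bound W(2) abs_triangle_ineq4 by (smt (verit))
  finally have "\<bar>q\<bar> * S \<le> (CARD('m) * B + 1) * W"
    by (simp add: algebra_simps)
  then have "\<bar>q\<bar> \<le> (CARD('m) * B + 1) * W / S"
    using S_pos by (simp add: field_simps)
  also have "\<dots> \<le> (CARD('m) * B + 1) * W / (\<beta> / D)"
    using S S_pos \<beta> D1 W0 B0 by (intro divide_left_mono) auto
  finally show "\<bar>q\<bar> \<le> (CARD('m) * B + 1) * D / \<beta> * W"
    by (simp add: field_simps)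
  have "\<bar>p i\<bar> \<le> \<bar>d i * p i\<bar>"
    using d(1)[of i] by (simp add: abs_mult mult_le_cancel_right1)
  also have "\<dots> = \<bar>r i - b i * q\<bar>"
    using eq[of i] by (simp add: algebra_simps)
  also have "\<dots> \<le> \<bar>r i\<bar> + \<bar>b i\<bar> * \<bar>q\<bar>"
    by (metis abs_mult abs_triangle_ineq4)
  also have "\<dots> \<le> W + B * \<bar>q\<bar>"
    using W(1)[of i] b[of i] by (intro add_mono mult_right_mono) auto
  finally show "\<bar>p i\<bar> \<le> W + B * \<bar>q\<bar>" .
qed

definition bordered_matrix ::
    "('m::finite \<Rightarrow> real) \<Rightarrow> ('m \<Rightarrow> real) \<Rightarrow> real^('m + unit)^('m + unit)" where
  "bordered_matrix d b = (\<chi> x y. case x of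
      Inl i \<Rightarrow> (case y of Inl j \<Rightarrow> if i = j then d i else 0 | Inr _ \<Rightarrow> b i)
    | Inr _ \<Rightarrow> (case y of Inl j \<Rightarrow> b j | Inr _ \<Rightarrow> 0))"

lemma sum_UNIV_Plus:
  "(\<Sum>x\<in>UNIV. f x) = (\<Sum>i\<in>UNIV. f (Inl i)) + (\<Sum>j\<in>UNIV. f (Inr j))"
  for f :: "'a::finite + 'b::finite \<Rightarrow> 'c::comm_monoid_add"
  by (subst UNIV_Plus_UNIV[symmetric], subst sum.Plus) (auto simp: comp_def)

lemma bordered_matrix_mult_Inl:
  "(bordered_matrix d b *v v) $ Inl i = d i * v $ Inl i + b i * v $ Inr ()"
  by (simp add: bordered_matrix_def matrix_vector_mult_def sum_UNIV_Plus UNIV_unit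
      if_distrib[where f = "\<lambda>z. z * _"] cong: if_cong)

lemma bordered_matrix_mult_Inr:
  "(bordered_matrix d b *v v) $ Inr () = (\<Sum>j\<in>UNIV. b j * v $ Inl j)"
  by (simp add: bordered_matrix_def matrix_vector_mult_def sum_UNIV_Plus)

lemma norm_le_bordered_matrix_mult:
  fixes d b :: "'m::finite \<Rightarrow> real" and D B \<beta> :: real
  assumes d: "\<And>i. 1 \<le> d i" "\<And>i. d i \<le> D" and b: "\<And>i. \<bar>b i\<bar> \<le> B"
    and \<beta>: "0 < \<beta>" "\<beta> \<le> (\<Sum>i\<in>UNIV. b i ^ 2)"
  shows "norm v \<le> (CARD('m) + (CARD('m) * B + 1)^2 * D / \<beta>) * norm (bordered_matrix d b *v v)"
proof -
  define W where "W = norm (bordered_matrix d b *v v)"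
  have eq: "d i * v $ Inl i + b i * v $ Inr () = (bordered_matrix d b *v v) $ Inl i" for i
    by (simp add: bordered_matrix_mult_Inl)
  have W: "\<bar>(bordered_matrix d b *v v) $ Inl i\<bar> \<le> W" "\<bar>\<Sum>j\<in>UNIV. b j * v $ Inl j\<bar> \<le> W" for i
    using component_le_norm_cart[of "bordered_matrix d b *v v" "Inl i"]
      component_le_norm_cart[of "bordered_matrix d b *v v" "Inr ()"]
    unfolding W_def bordered_matrix_mult_Inr by auto
  note bound = bordered_system_bound[OF d b \<beta> eq W]
  have B0: "0 \<le> B"
    using b abs_ge_zero order_trans by blast
  have "norm v \<le> (\<Sum>x\<in>UNIV. \<bar>v $ x\<bar>)"
    by (rule norm_le_l1_cart)
  also have "\<dots> = (\<Sum>i\<in>UNIV. \<bar>v $ Inl i\<bar>) + \<bar>v $ Inr ()\<bar>"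
    by (simp add: sum_UNIV_Plus UNIV_unit)
  also have "\<dots> \<le> (\<Sum>i\<in>(UNIV::'m set). W + B * \<bar>v $ Inr ()\<bar>) + \<bar>v $ Inr ()\<bar>"
    using bound(2) by (intro add_mono sum_mono) auto
  also have "\<dots> = CARD('m) * W + (CARD('m) * B + 1) * \<bar>v $ Inr ()\<bar>"
    by (simp add: algebra_simps)
  also have "\<dots> \<le> CARD('m) * W + (CARD('m) * B + 1) * ((CARD('m) * B + 1) * D / \<beta> * W)"
    using bound(1) B0 by (intro add_left_mono mult_left_mono) auto
  finally show ?thesis
    by (simp add: W_def power2_eq_square algebra_simps)
qed

lemma invertible_spec_norm_inv_le:
  fixes J :: "real^'n::finite^'n"
  assumes bound: "\<And>v. norm v \<le> C * norm (J *v v)"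
  shows "invertible J" and "spec_norm (matrix_inv J) \<le> C"
proof -
  have "inj ((*v) J)"
  proof (rule injI)
    fix v w
    assume "J *v v = J *v w"
    then have "J *v (v - w) = 0"
      by (simp add: matrix_vector_mult_diff_distrib)
    then show "v = w"
      using bound[of "v - w"] by simp
  qed
  then show "invertible J"
    using invertible_left_inverse matrix_left_invertible_injective by blast
  then have "J ** matrix_inv J = mat 1"
    unfolding matrix_inv_def invertible_def by (metis (mono_tags, lifting) someI_ex)
  then have "norm (matrix_inv J *v w) \<le> C * norm w" for w
    using bound[of "matrix_inv J *v w"] by (simp add: matrix_vector_mul_assoc)
  then show "spec_norm (matrix_inv J) \<le> C"
    unfolding spec_norm_def by (intro onorm_le) auto
qed

lemma convex_on_imp_mono_deriv:
  fixes l :: "real \<Rightarrow> real"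
  assumes convex: "convex_on UNIV l" and diff: "\<And>t. l differentiable (at t)"
  shows "mono (deriv l)"
proof (rule monoI)
  fix a b :: real
  assume "a \<le> b"
  have tangent: "deriv l s * (t - s) \<le> l t - l s" for s t
    using convex_on_imp_above_tangent[OF convex, of s t "deriv l s"] diff[of s]
    by (simp add: DERIV_deriv_iff_real_differentiable)
  have "deriv l a * (b - a) \<le> deriv l b * (b - a)"
    using tangent[of a b] tangent[of b a] by (simp add: algebra_simps)
  then show "deriv l a \<le> deriv l b"
    using \<open>a \<le> b\<close> by (cases "a = b") (auto simp: mult_le_cancel_right)
qed

lemma deriv_mono_lipschitz_in_interval:
  fixes g :: "real \<Rightarrow> real"
  assumes mono: "mono g" and lip: "K-lipschitz_on S g" and "open S" "x \<in> S"
    and diff: "g differentiable (at x)"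
  shows "deriv g x \<in> {0..K}"
proof -
  have "((\<lambda>y. (g y - g x) / (y - x)) \<longlongrightarrow> deriv g x) (at x)"
    using diff by (simp add: DERIV_deriv_iff_real_differentiable[symmetric] has_field_derivative_iff)
  moreover have "\<forall>\<^sub>F y in at x. (g y - g x) / (y - x) \<in> {0..K}"
    using eventually_at_in_open[OF \<open>open S\<close> \<open>x \<in> S\<close>]
  proof eventually_elim
    case (elim y)
    then have "y \<noteq> x" "y \<in> S"
      by auto
    have "0 \<le> (g y - g x) / (y - x)"
      using monoD[OF mono, of x y] monoD[OF mono, of y x]
      by (cases "x \<le> y") (auto intro: divide_nonneg_nonneg divide_nonpos_nonpos)
    moreover have "\<bar>g y - g x\<bar> \<le> K * \<bar>y - x\<bar>"
      using lipschitz_onD[OF lip \<open>y \<in> S\<close> \<open>x \<in> S\<close>] by (simp add: dist_real_def)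
    then have "\<bar>(g y - g x) / (y - x)\<bar> \<le> K"
      using \<open>y \<noteq> x\<close> by (simp add: abs_divide divide_le_eq)
    then have "(g y - g x) / (y - x) \<le> K"
      by (rule abs_le_D1)
    ultimately show ?case
      by simp
  qed
  ultimately show ?thesis
    by (intro Lim_in_closed_set[of "{0..K}"]) auto
qed

lemma clarke_subdiff_mono_lipschitz_subset:
  fixes g :: "real \<Rightarrow> real"
  assumes "mono g" "K-lipschitz_on S g" "open S" "t \<in> S"
  shows "clarke_subdiff g t \<subseteq> {0..K}"
  unfolding clarke_subdiff_def
proof (rule hull_minimal)
  show "{d. \<exists>s. s \<longlonglongrightarrow> t \<and> (\<forall>k. g differentiable (at (s k))) \<and> (\<lambda>k. deriv g (s k)) \<longlonglongrightarrow> d}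
      \<subseteq> {0..K}"
  proof
    fix d
    assume "d \<in> {d. \<exists>s. s \<longlonglongrightarrow> t \<and> (\<forall>k. g differentiable (at (s k))) \<and> (\<lambda>k. deriv g (s k)) \<longlonglongrightarrow> d}"
    then obtain s where s: "s \<longlonglongrightarrow> t" "\<And>k. g differentiable (at (s k))" "(\<lambda>k. deriv g (s k)) \<longlonglongrightarrow> d"
      by blast
    have "\<forall>\<^sub>F k in sequentially. s k \<in> S"
      using topological_tendstoD[OF s(1) \<open>open S\<close> \<open>t \<in> S\<close>] .
    then have "\<forall>\<^sub>F k in sequentially. deriv g (s k) \<in> {0..K}"
      by eventually_elim (use deriv_mono_lipschitz_in_interval[OF assms(1-3)] s(2) in blast)
    then show "d \<in> {0..K}"
      by (intro Lim_in_closed_set[OF _ _ _ s(3)]) auto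
  qed
qed (rule convex_real_interval)

lemma uniform_lipschitz_near_components:
  fixes g :: "real \<Rightarrow> real" and u :: "real^'m::finite"
  assumes "\<And>t. \<exists>\<delta>>0. \<exists>K. K-lipschitz_on (ball t \<delta>) g"
  obtains \<delta> K where "0 < \<delta>" "\<And>i. K-lipschitz_on (ball (u $ i) \<delta>) g"
proof -
  have "\<forall>i. \<exists>\<delta>. 0 < \<delta> \<and> (\<exists>K. K-lipschitz_on (ball (u $ i) \<delta>) g)"
    using assms by blast
  then obtain \<delta>f where \<delta>f: "\<forall>i. 0 < \<delta>f i \<and> (\<exists>K. K-lipschitz_on (ball (u $ i) (\<delta>f i)) g)"
    unfolding choice_iff by blast
  then have "\<forall>i. \<exists>K. K-lipschitz_on (ball (u $ i) (\<delta>f i)) g"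
    by blast
  then obtain Kf where Kf: "\<And>i. (Kf i)-lipschitz_on (ball (u $ i) (\<delta>f i)) g"
    unfolding choice_iff by blast
  have "(Max (range Kf))-lipschitz_on (ball (u $ i) (Min (range \<delta>f))) g" for i
    by (rule lipschitz_on_mono[OF Kf]) (auto simp: subset_ball)
  moreover have "0 < Min (range \<delta>f)"
    using \<delta>f by simp
  ultimately show ?thesis
    using that by blast
qed

lemma norm_bounds_near_nonzero:
  fixes G :: "'a::metric_space \<Rightarrow> 'b::real_normed_vector"
  assumes "isCont G a" "G a \<noteq> 0"
  obtains \<delta> where "0 < \<delta>"
    "\<And>u. dist u a < \<delta> \<Longrightarrow> norm (G a) / 2 \<le> norm (G u) \<and> norm (G u) \<le> 2 * norm (G a)"
proof -
  obtain \<delta> where "0 < \<delta>" and \<delta>: "\<And>u. dist u a < \<delta> \<Longrightarrow> dist (G u) (G a) < norm (G a) / 2"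
    using assms unfolding continuous_at_eps_delta by (metis zero_less_norm_iff half_gt_zero)
  show ?thesis
  proof (rule that[OF \<open>0 < \<delta>\<close>])
    fix u
    assume "dist u a < \<delta>"
    then have "norm (G u - G a) < norm (G a) / 2"
      using \<delta> by (simp add: dist_norm)
    then show "norm (G a) / 2 \<le> norm (G u) \<and> norm (G u) \<le> 2 * norm (G a)"
      using norm_triangle_ineq2[of "G u" "G a"] norm_triangle_ineq2[of "G a" "G u"]
      by (simp add: norm_minus_commute)
  qed
qed

lemma JF_set_eq_bordered_matrix:
  fixes u :: "real^'m::finite"
  shows "JF_set l u \<rho> =
    {bordered_matrix (\<lambda>i. 1 + \<rho> / CARD('m) * \<eta> i) (\<lambda>i. deriv l (u $ i) / CARD('m)) | \<eta>.
       \<forall>i. \<eta> i \<in> clarke_subdiff (deriv l) (u $ i)}"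
  unfolding JF_set_def bordered_matrix_def by blast

lemma JF_set_inverse_bound:
  fixes u :: "real^'m::finite" and K R \<gamma> \<Gamma> :: real
  assumes clarke: "\<And>i. clarke_subdiff (deriv l) (u $ i) \<subseteq> {0..K}"
    and \<rho>: "0 \<le> \<rho>" "\<rho> \<le> R"
    and grad: "0 < \<gamma>" "\<gamma> \<le> norm (\<chi> i. deriv l (u $ i))" "norm (\<chi> i. deriv l (u $ i)) \<le> \<Gamma>"
    and J: "J \<in> JF_set l u \<rho>"
  shows "invertible J"
    and "spec_norm (matrix_inv J)
      \<le> real CARD('m) + (\<Gamma> + 1)^2 * (1 + R * K / real CARD('m)) * real CARD('m)^2 / \<gamma>^2"
proof -
  define n where "n = real CARD('m)"
  have n: "0 < n"
    by (simp add: n_def)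
  obtain \<eta> where \<eta>_clarke: "\<forall>i. \<eta> i \<in> clarke_subdiff (deriv l) (u $ i)"
    and J_eq: "J = bordered_matrix (\<lambda>i. 1 + \<rho> / n * \<eta> i) (\<lambda>i. deriv l (u $ i) / n)"
    using J unfolding JF_set_eq_bordered_matrix n_def by blast
  have \<eta>: "\<eta> i \<in> {0..K}" for i
    using \<eta>_clarke clarke by blast
  have d: "1 \<le> 1 + \<rho> / n * \<eta> i" "1 + \<rho> / n * \<eta> i \<le> 1 + R / n * K" for i
    using \<eta>[of i] \<rho> n by (auto intro!: mult_mono divide_right_mono)
  have b: "\<bar>deriv l (u $ i) / n\<bar> \<le> \<Gamma> / n" for i
    using component_le_norm_cart[of "\<chi> i. deriv l (u $ i)" i] grad(3) n
    by (simp add: abs_divide divide_right_mono)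
  have "norm (\<chi> i. deriv l (u $ i))^2 = (\<Sum>i\<in>UNIV. (deriv l (u $ i))^2)"
    by (simp add: norm_vec_def L2_set_def sum_nonneg)
  then have "(\<Sum>i\<in>UNIV. (deriv l (u $ i) / n)^2) = (norm (\<chi> i. deriv l (u $ i)) / n)^2"
    by (simp add: power_divide sum_divide_distrib)
  then have \<beta>: "(\<gamma> / n)^2 \<le> (\<Sum>i\<in>UNIV. (deriv l (u $ i) / n)^2)"
    using grad n by (simp add: power_mono divide_right_mono)
  have bound: "norm v \<le> (n + (n * (\<Gamma> / n) + 1)^2 * (1 + R / n * K) / (\<gamma> / n)^2) * norm (J *v v)" for v
    unfolding J_eq using norm_le_bordered_matrix_mult[OF d b _ \<beta>, folded n_def] grad(1) n
    by simp
  have C_eq: "n + (n * (\<Gamma> / n) + 1)^2 * (1 + R / n * K) / (\<gamma> / n)^2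
      = real CARD('m) + (\<Gamma> + 1)^2 * (1 + R * K / real CARD('m)) * real CARD('m)^2 / \<gamma>^2"
    using n grad(1) by (simp add: n_def field_simps)
  show "invertible J"
    "spec_norm (matrix_inv J) \<le> real CARD('m) + (\<Gamma> + 1)^2 * (1 + R * K / real CARD('m)) * real CARD('m)^2 / \<gamma>^2"
    using invertible_spec_norm_inv_le[OF bound, unfolded C_eq] by blast+
qed

lemma isCont_vec_componentwise:
  fixes g :: "'a::metric_space \<Rightarrow> 'b::metric_space"
  assumes "\<And>t. isCont g t"
  shows "isCont (\<lambda>u::'a^'m::finite. \<chi> i. g (u $ i)) a"
  unfolding isCont_def
  by (intro tendsto_vec_lambda isCont_tendsto_compose[OF assms] tendsto_vec_nth tendsto_ident_at)

lemma JF_set_uniformly_invertible_near: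
  fixes l :: "real \<Rightarrow> real" and u0 :: "real^'m::finite" and \<rho>0 :: real
  assumes mono: "mono (deriv l)"
    and loc_lip: "\<And>t. \<exists>\<delta>>0. \<exists>K. K-lipschitz_on (ball t \<delta>) (deriv l)"
    and grad_nonzero: "(\<chi> i. deriv l (u0 $ i)) \<noteq> 0" and "0 < \<rho>0"
  shows "\<exists>N C. open N \<and> (u0, \<rho>0) \<in> N \<and> C > 0 \<and>
    (\<forall>u \<rho> J. (u, \<rho>) \<in> N \<and> J \<in> JF_set l u \<rho> \<longrightarrow> invertible J \<and> spec_norm (matrix_inv J) \<le> C)"
proof -
  let ?grad = "\<lambda>u::real^'m. \<chi> i. deriv l (u $ i)"
  obtain \<delta> K where \<delta>: "0 < \<delta>" and lip: "\<And>i. K-lipschitz_on (ball (u0 $ i) \<delta>) (deriv l)"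
    using uniform_lipschitz_near_components[OF loc_lip] by blast
  have "isCont (deriv l) t" for t
    using loc_lip[of t] continuous_on_interior lipschitz_on_continuous_on by fastforce
  then obtain \<delta>' where \<delta>': "0 < \<delta>'"
    and grad_near: "\<And>u. dist u u0 < \<delta>' \<Longrightarrow>
      norm (?grad u0) / 2 \<le> norm (?grad u) \<and> norm (?grad u) \<le> 2 * norm (?grad u0)"
    using norm_bounds_near_nonzero[OF isCont_vec_componentwise grad_nonzero] by blast
  define N where "N = ball u0 (min \<delta> \<delta>') \<times> {0<..<2 * \<rho>0}"
  define \<gamma> where "\<gamma> = norm (?grad u0) / 2"
  define C where "C = real CARD('m) + (4 * \<gamma> + 1)^2 * (1 + 2 * \<rho>0 * K / real CARD('m))
    * real CARD('m)^2 / \<gamma>^2"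
  have bound: "invertible J \<and> spec_norm (matrix_inv J) \<le> C"
    if "(u, \<rho>) \<in> N" "J \<in> JF_set l u \<rho>" for u \<rho> J
  proof -
    have "u $ i \<in> ball (u0 $ i) \<delta>" for i
      using that(1) dist_vec_nth_le[of u0 i u] by (auto simp: N_def dist_commute)
    then have "clarke_subdiff (deriv l) (u $ i) \<subseteq> {0..K}" for i
      using clarke_subdiff_mono_lipschitz_subset[OF mono lip] by blast
    moreover have "dist u u0 < \<delta>'"
      using that(1) by (auto simp: N_def dist_commute)
    ultimately show ?thesis
      using JF_set_inverse_bound[of l u K \<rho> "2 * \<rho>0" \<gamma> "4 * \<gamma>" J] that grad_near grad_nonzero
      by (auto simp: N_def \<gamma>_def C_def)
  qed
  have "0 < C"
    using lipschitz_on_nonneg[OF lip] \<open>0 < \<rho>0\<close> unfolding C_def by (auto intro!: add_pos_nonneg)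
  moreover have "(u0, \<rho>0) \<in> N" "open N"
    using \<delta> \<delta>' \<open>0 < \<rho>0\<close> by (auto simp: N_def intro: open_Times)
  ultimately show ?thesis
    using bound by blast
qed

theorem mainTheorem5:
  fixes l :: "real \<Rightarrow> real" and lam :: real
    and x u_star :: "real^'m::finite" and \<rho>_star :: real
  assumes A1_mono: "mono l"
    and A1_convex: "convex_on UNIV l"
    and A1_inf: "\<exists>t. l t < lam"
    and A3_diff: "\<forall>t. l differentiable (at t)"
    and A3_nonconst: "\<exists>a b. l a \<noteq> l b"
    and A3_semismooth: "\<forall>t. semismooth_at (deriv l) t"
    and x_notin_Z: "\<not> ((1 / real CARD('m)) * (\<Sum>i\<in>UNIV. l (x $ i)) \<le> lam)"
    and F1: "u_star - x + (\<rho>_star / real CARD('m)) *\<^sub>R (\<chi> i. deriv l (u_star $ i)) = 0"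
    and F2: "(1 / real CARD('m)) * (\<Sum>i\<in>UNIV. l (u_star $ i)) - lam = 0"
    and rho_pos: "\<rho>_star > 0"
  shows "(\<forall>J\<in>JF_set l u_star \<rho>_star. invertible J) \<and>
         (\<exists>N C. open N \<and> (u_star, \<rho>_star) \<in> N \<and> C > 0 \<and>
            (\<forall>u \<rho> J. (u, \<rho>) \<in> N \<and> J \<in> JF_set l u \<rho> \<longrightarrow>
                invertible J \<and> spec_norm (matrix_inv J) \<le> C))"
proof -
  have "mono (deriv l)"
    using convex_on_imp_mono_deriv A1_convex A3_diff by blast
  moreover have "\<exists>\<delta>>0. \<exists>K. K-lipschitz_on (ball t \<delta>) (deriv l)" for t
    using A3_semismooth unfolding semismooth_at_def by blast
  moreover have "(\<chi> i. deriv l (u_star $ i)) \<noteq> 0"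
  proof
    assume "(\<chi> i. deriv l (u_star $ i)) = 0"
    then have "u_star = x"
      using F1 by simp
    then show False
      using F2 x_notin_Z by simp
  qed
  ultimately obtain N C where "open N" "(u_star, \<rho>_star) \<in> N" "C > 0"
    and bound: "\<forall>u \<rho> J. (u, \<rho>) \<in> N \<and> J \<in> JF_set l u \<rho> \<longrightarrow> invertible J \<and> spec_norm (matrix_inv J) \<le> C"
    using JF_set_uniformly_invertible_near rho_pos by metis
  then show ?thesis
    by blast
qed

end
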